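(* Let $S$ be an entropy function for a finite set $X$, let $X'\subset X$, and let $R$ be a new element not in $X$, with $Y:=X'\cup\{R\}$. Define $T$ on $2^Y$ by $T(A):=S(A)$ and $T(A\cup\{R\}):=S(A\cup(X\setminus X'))$ for all $A\subseteq X'$. Then $T$ is an entropy function for $Y$. Moreover, for any EDF $f$ for $S$, the function $g:Y\to\mathbb R$ given by $g(x)=f(x)$ for $x\in X'$ and $g(R)=\sum_{x\in X\setminus X'}f(x)$ is an EDF for $T$.
   Context: An entropy function for a finite set $X$ is a function $S:2^X\to[0,\infty)$ with $S(\emptyset)=0$, $S(A)+S(B)\ge S(A\cap B)+S(A\cup B)$ and $S(A)+S(B)\ge S(A\setminus B)+S(B\setminus A)$ for all $A,B\subseteq X$. An entanglement distribution function (EDF) for $S$ is a function $f:X\to\mathbb R$ with $\big|\sum_{x\in A}f(x)\big|\le S(A)$ for all $A\subseteq X$. *)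

theory Defs
  imports Complex_Main
begin

text \<open>Entropy function for a finite set X: a function on subsets of X (values outside
  Pow X are irrelevant) with S {} = 0, nonnegative, submodular and weakly monotone.\<close>
definition entropy_function :: "'a set \<Rightarrow> ('a set \<Rightarrow> real) \<Rightarrow> bool" where
  "entropy_function X S \<longleftrightarrow> finite X \<and> S {} = 0 \<and>
     (\<forall>A. A \<subseteq> X \<longrightarrow> S A \<ge> 0) \<and>
     (\<forall>A B. A \<subseteq> X \<longrightarrow> B \<subseteq> X \<longrightarrow> S A + S B \<ge> S (A \<inter> B) + S (A \<union> B)) \<and>
     (\<forall>A B. A \<subseteq> X \<longrightarrow> B \<subseteq> X \<longrightarrow> S A + S B \<ge> S (A - B) + S (B - A))"

definition EDF :: "'a set \<Rightarrow> ('a set \<Rightarrow> real) \<Rightarrow> ('a \<Rightarrow> real) \<Rightarrow> bool" where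
  "EDF X S f \<longleftrightarrow> (\<forall>A. A \<subseteq> X \<longrightarrow> \<bar>\<Sum>x\<in>A. f x\<bar> \<le> S A)"

end

theory Submission
  imports Defs
begin

text \<open>Replacing the new point \<open>R\<close> by the block \<open>X - X'\<close> it stands for is a map
  \<open>Pow Y \<rightarrow> Pow X\<close> preserving unions and differences, and \<open>T\<close> is \<open>S\<close> composed with it.
  Every axiom of an entropy function only involves \<open>\<emptyset>\<close>, \<open>\<union>\<close>, \<open>\<inter>\<close> and \<open>-\<close>, so it
  transfers along such a map; and the sum of the new distribution function over \<open>A\<close> is the
  sum of \<open>f\<close> over the image of \<open>A\<close>, so the EDF bound transfers as well.\<close>

lemma entropy_function_pullback:
  assumes S: "entropy_function X S"
    and fin: "finite Y"
    and into: "\<And>A. A \<subseteq> Y \<Longrightarrow> \<phi> A \<subseteq> X"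
    and union: "\<And>A B. A \<subseteq> Y \<Longrightarrow> B \<subseteq> Y \<Longrightarrow> \<phi> (A \<union> B) = \<phi> A \<union> \<phi> B"
    and diff: "\<And>A B. A \<subseteq> Y \<Longrightarrow> B \<subseteq> Y \<Longrightarrow> \<phi> (A - B) = \<phi> A - \<phi> B"
    and T: "\<And>A. A \<subseteq> Y \<Longrightarrow> T A = S (\<phi> A)"
  shows "entropy_function Y T"
proof -
  have inter: "\<phi> (A \<inter> B) = \<phi> A \<inter> \<phi> B" if "A \<subseteq> Y" "B \<subseteq> Y" for A B
  proof -
    have "\<phi> (A \<inter> B) = \<phi> (A - (A - B))" by (simp add: Diff_Diff_Int)
    also have "\<dots> = \<phi> A - (\<phi> A - \<phi> B)" using that diff[of A "A - B"] diff[of A B] by auto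
    finally show ?thesis by blast
  qed
  have S0: "S {} = 0" and S_nonneg: "\<And>A. A \<subseteq> X \<Longrightarrow> S A \<ge> 0"
    and S_submod: "\<And>A B. A \<subseteq> X \<Longrightarrow> B \<subseteq> X \<Longrightarrow> S A + S B \<ge> S (A \<inter> B) + S (A \<union> B)"
    and S_diff: "\<And>A B. A \<subseteq> X \<Longrightarrow> B \<subseteq> X \<Longrightarrow> S A + S B \<ge> S (A - B) + S (B - A)"
    using S unfolding entropy_function_def by auto
  have "\<phi> {} = {}" using diff[of "{}" "{}"] by simp
  then have "T {} = 0" using S0 T[of "{}"] by simp
  moreover have "T A \<ge> 0" if "A \<subseteq> Y" for A
    using S_nonneg T into that by simp
  moreover have "T A + T B \<ge> T (A \<inter> B) + T (A \<union> B)" if "A \<subseteq> Y" "B \<subseteq> Y" for A B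
    using S_submod[OF into into] T[of "A \<inter> B"] T[of "A \<union> B"] T[of A] T[of B] that
    by (simp add: inter union le_infI1 le_supI)
  moreover have "T A + T B \<ge> T (A - B) + T (B - A)" if "A \<subseteq> Y" "B \<subseteq> Y" for A B
    using S_diff[OF into into] T[of "A - B"] T[of "B - A"] T[of A] T[of B] that
    by (simp add: diff Diff_subset_conv le_supI2)
  ultimately show ?thesis using fin by (simp add: entropy_function_def)
qed

lemma EDF_pullback:
  assumes "EDF X S f"
    and "\<And>A. A \<subseteq> Y \<Longrightarrow> \<phi> A \<subseteq> X"
    and "\<And>A. A \<subseteq> Y \<Longrightarrow> T A = S (\<phi> A)"
    and "\<And>A. A \<subseteq> Y \<Longrightarrow> sum g A = sum f (\<phi> A)"
  shows "EDF Y T g"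
  using assms unfolding EDF_def by metis

definition expand_point :: "'a \<Rightarrow> 'a set \<Rightarrow> 'a set \<Rightarrow> 'a set" where
  "expand_point R D A = (A - {R}) \<union> (if R \<in> A then D else {})"

lemma expand_point_union:
  "expand_point R D (A \<union> B) = expand_point R D A \<union> expand_point R D B"
  by (auto simp: expand_point_def)

lemma expand_point_diff:
  assumes "A \<inter> D = {}" "B \<inter> D = {}" "R \<notin> D"
  shows "expand_point R D (A - B) = expand_point R D A - expand_point R D B"
  using assms by (auto simp: expand_point_def)

lemma sum_expand_point:
  assumes "finite A" "finite D" "A \<inter> D = {}"
  shows "(\<Sum>x\<in>A. if x = R then sum f D else f x) = sum f (expand_point R D A)"
proof (cases "R \<in> A")
  case True
  have "(\<Sum>x\<in>A. if x = R then sum f D else f x) = sum f D + sum f (A - {R})"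
    using assms(1) True by (simp add: sum.remove)
  also have "\<dots> = sum f ((A - {R}) \<union> D)"
    using assms by (subst sum.union_disjoint) (auto simp: add.commute)
  finally show ?thesis using True by (simp add: expand_point_def)
next
  case False
  then show ?thesis by (auto simp: expand_point_def intro: sum.cong)
qed

theorem proposition23:
  fixes X X' :: "'a set" and S :: "'a set \<Rightarrow> real" and R :: 'a
    and T :: "'a set \<Rightarrow> real" and Y :: "'a set"
  assumes S: "entropy_function X S"
    and sub: "X' \<subseteq> X"
    and R: "R \<notin> X"
    and Y: "Y = insert R X'"
    and T1: "\<And>A. A \<subseteq> X' \<Longrightarrow> T A = S A"
    and T2: "\<And>A. A \<subseteq> X' \<Longrightarrow> T (insert R A) = S (A \<union> (X - X'))"
  shows "entropy_function Y T \<and>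
         (\<forall>f. EDF X S f \<longrightarrow>
              EDF Y T (\<lambda>x. if x = R then (\<Sum>z\<in>X - X'. f z) else f x))"
proof -
  let ?\<phi> = "expand_point R (X - X')"
  have finite: "finite X" "finite Y"
    using S sub Y finite_subset by (auto simp: entropy_function_def)
  have disjoint: "A \<inter> (X - X') = {}" if "A \<subseteq> Y" for A
    using that Y R by auto
  have into: "?\<phi> A \<subseteq> X" if "A \<subseteq> Y" for A
    using that Y sub by (auto simp: expand_point_def)
  have T: "T A = S (?\<phi> A)" if "A \<subseteq> Y" for A
  proof (cases "R \<in> A")
    case True
    then have "A = insert R (A - {R})" "A - {R} \<subseteq> X'" using that Y by auto
    then show ?thesis using T2 True by (metis expand_point_def)
  next
    case False
    then show ?thesis using that Y T1 by (auto simp: expand_point_def subset_insert)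
  qed
  have "entropy_function Y T"
    by (rule entropy_function_pullback[OF S finite(2) into _ _ T])
      (use R in \<open>auto simp: expand_point_union expand_point_diff disjoint\<close>)
  moreover have "EDF Y T (\<lambda>x. if x = R then (\<Sum>z\<in>X - X'. f z) else f x)"
    if "EDF X S f" for f
  proof (rule EDF_pullback[OF that into T])
    fix A assume "A \<subseteq> Y"
    then show "(\<Sum>x\<in>A. if x = R then (\<Sum>z\<in>X - X'. f z) else f x) = sum f (?\<phi> A)"
      using finite disjoint finite_subset by (intro sum_expand_point) auto
  qed
  ultimately show ?thesis by blast
qed

end
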